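(* Let $X$ be a separated metric compact Hausdorff space. A binary continuous submetric $\gamma$ on $X$ is symmetric if and only if $\gamma((x,i),(y,j))=\gamma((x,1-i),(y,1-j))$ for all $x,y\in X$ and $i,j\in\{0,1\}$.
   Context: A metric on a set $X$ is a map $d\colon X\times X\to[0,\infty]$ with $d(x,x)=0$ and $d(x,z)\le d(x,y)+d(y,z)$ (not necessarily symmetric, $\infty$ allowed); separated means $d(x,y)=0=d(y,x)$ implies $x=y$. A separated metric compact Hausdorff space is a compact Hausdorff space with a separated metric continuous $X\times X\to[0,\infty]$ for the upper topology on $[0,\infty]$ (open sets $]u,\infty]$); morphisms are continuous non-expansive maps. $X+X$ is the coproduct with elements $(x,i)$, $i\in\{0,1\}$, coproduct topology and metric $d((x,i),(y,i))=d(x,y)$, $d((x,i),(y,1-i))=\infty$. A binary continuous submetric on $X$ is a (not necessarily separated) metric $\gamma$ on $X+X$, continuous for the upper topology, below the coproduct metric. Its associated corelation is $\binom{q_0}{q_1}\colon X+X\to S:=(X+X)/{\sim_\gamma}$ where $u\sim_\gamma v$ iff $\gamma(u,v)=\gamma(v,u)=0$, $S$ has quotient topology and metric $([u],[v])\mapsto\gamma(u,v)$, $q_i(x)=[(x,i)]$. $\gamma$ is symmetric if there is a continuous non-expansive $s\colon S\to S$ with $s\circ q_0=q_1$ and $s\circ q_1=q_0$. *)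

theory Defs
  imports "HOL-Analysis.Analysis" "HOL-Library.Extended_Nonnegative_Real"
begin

text \<open>The two summands of X+X are
  indexed by bool: False stands for 0, True for 1, and 1-i is \<not> i.\<close>

definition is_metric_on :: "'a set \<Rightarrow> ('a \<Rightarrow> 'a \<Rightarrow> ennreal) \<Rightarrow> bool" where
  "is_metric_on A d \<longleftrightarrow> (\<forall>x\<in>A. d x x = 0) \<and>
     (\<forall>x\<in>A. \<forall>y\<in>A. \<forall>z\<in>A. d x z \<le> d x y + d y z)"

definition separated_on :: "'a set \<Rightarrow> ('a \<Rightarrow> 'a \<Rightarrow> ennreal) \<Rightarrow> bool" where
  "separated_on A d \<longleftrightarrow> (\<forall>x\<in>A. \<forall>y\<in>A. d x y = 0 \<and> d y x = 0 \<longrightarrow> x = y)"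

text \<open>Continuity into [0,\<infinity>] with the upper topology (open sets ]u,\<infinity>]).\<close>
definition upper_continuous :: "'a topology \<Rightarrow> ('a \<Rightarrow> ennreal) \<Rightarrow> bool" where
  "upper_continuous T f \<longleftrightarrow> (\<forall>u. openin T {z \<in> topspace T. u < f z})"

definition sep_metric_CH :: "'a topology \<Rightarrow> ('a \<Rightarrow> 'a \<Rightarrow> ennreal) \<Rightarrow> bool" where
  "sep_metric_CH X d \<longleftrightarrow> compact_space X \<and> Hausdorff_space X \<and>
     is_metric_on (topspace X) d \<and> separated_on (topspace X) d \<and>
     upper_continuous (prod_topology X X) (case_prod d)"

definition coprod_top :: "'a topology \<Rightarrow> (bool \<times> 'a) topology" where
  "coprod_top X = sum_topology (\<lambda>_. X) UNIV"

definition coprod_metric :: "('a \<Rightarrow> 'a \<Rightarrow> ennreal) \<Rightarrow> (bool \<times> 'a) \<Rightarrow> (bool \<times> 'a) \<Rightarrow> ennreal" where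
  "coprod_metric d u v = (if fst u = fst v then d (snd u) (snd v) else \<infinity>)"

definition binary_cont_submetric ::
  "'a topology \<Rightarrow> ('a \<Rightarrow> 'a \<Rightarrow> ennreal) \<Rightarrow> ((bool \<times> 'a) \<Rightarrow> (bool \<times> 'a) \<Rightarrow> ennreal) \<Rightarrow> bool" where
  "binary_cont_submetric X d \<gamma> \<longleftrightarrow>
     is_metric_on (topspace (coprod_top X)) \<gamma> \<and>
     upper_continuous (prod_topology (coprod_top X) (coprod_top X)) (case_prod \<gamma>) \<and>
     (\<forall>u\<in>topspace (coprod_top X). \<forall>v\<in>topspace (coprod_top X). \<gamma> u v \<le> coprod_metric d u v)"

definition quotient_topology :: "'a topology \<Rightarrow> ('a \<Rightarrow> 'b) \<Rightarrow> 'b set \<Rightarrow> 'b topology" where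
  "quotient_topology T f S = topology (\<lambda>U. U \<subseteq> S \<and> openin T {x \<in> topspace T. f x \<in> U})"

lemma istopology_quotient:
  "istopology (\<lambda>U. U \<subseteq> S \<and> openin T {x \<in> topspace T. f x \<in> U})"
proof -
  have i: "{x \<in> topspace T. f x \<in> A \<inter> B} = {x \<in> topspace T. f x \<in> A} \<inter> {x \<in> topspace T. f x \<in> B}" for A B
    by auto
  have u: "{x \<in> topspace T. f x \<in> \<Union>K} = \<Union>((\<lambda>U. {x \<in> topspace T. f x \<in> U}) ` K)" for K
    by auto
  show ?thesis unfolding istopology_def
    by (auto simp only: i u intro!: openin_Int openin_Union)
qed

definition gcls :: "'a topology \<Rightarrow> ((bool \<times> 'a) \<Rightarrow> (bool \<times> 'a) \<Rightarrow> ennreal) \<Rightarrow> bool \<times> 'a \<Rightarrow> (bool \<times> 'a) set" where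
  "gcls X \<gamma> u = {v \<in> topspace (coprod_top X). \<gamma> u v = 0 \<and> \<gamma> v u = 0}"

definition corel_set :: "'a topology \<Rightarrow> ((bool \<times> 'a) \<Rightarrow> (bool \<times> 'a) \<Rightarrow> ennreal) \<Rightarrow> (bool \<times> 'a) set set" where
  "corel_set X \<gamma> = gcls X \<gamma> ` topspace (coprod_top X)"

definition corel_top :: "'a topology \<Rightarrow> ((bool \<times> 'a) \<Rightarrow> (bool \<times> 'a) \<Rightarrow> ennreal) \<Rightarrow> (bool \<times> 'a) set topology" where
  "corel_top X \<gamma> = quotient_topology (coprod_top X) (gcls X \<gamma>) (corel_set X \<gamma>)"

definition corel_metric :: "((bool \<times> 'a) \<Rightarrow> (bool \<times> 'a) \<Rightarrow> ennreal) \<Rightarrow> (bool \<times> 'a) set \<Rightarrow> (bool \<times> 'a) set \<Rightarrow> ennreal" where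
  "corel_metric \<gamma> A B = \<gamma> (SOME u. u \<in> A) (SOME v. v \<in> B)"

definition corel_q :: "'a topology \<Rightarrow> ((bool \<times> 'a) \<Rightarrow> (bool \<times> 'a) \<Rightarrow> ennreal) \<Rightarrow> bool \<Rightarrow> 'a \<Rightarrow> (bool \<times> 'a) set" where
  "corel_q X \<gamma> i x = gcls X \<gamma> (i, x)"

definition symmetric_submetric :: "'a topology \<Rightarrow> ((bool \<times> 'a) \<Rightarrow> (bool \<times> 'a) \<Rightarrow> ennreal) \<Rightarrow> bool" where
  "symmetric_submetric X \<gamma> \<longleftrightarrow>
     (\<exists>s. continuous_map (corel_top X \<gamma>) (corel_top X \<gamma>) s \<and>
          (\<forall>A\<in>corel_set X \<gamma>. \<forall>B\<in>corel_set X \<gamma>.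
              corel_metric \<gamma> (s A) (s B) \<le> corel_metric \<gamma> A B) \<and>
          (\<forall>x\<in>topspace X. s (corel_q X \<gamma> False x) = corel_q X \<gamma> True x \<and>
                           s (corel_q X \<gamma> True x) = corel_q X \<gamma> False x))"

end

theory Submission
  imports Defs
begin

text \<open>The metric of S is \<gamma> evaluated on representatives, and s must send the class of
  (i, x) to the class of (\<not> i, x). So a non-expansive s forces
  \<gamma> (\<not> i, x) (\<not> j, y) \<le> \<gamma> (i, x) (j, y), and applying this twice gives equality.
  Conversely, if \<gamma> is invariant under swapping the two summands, the swap maps
  \<gamma>-equivalence classes onto \<gamma>-equivalence classes and so descends to an isometry of S,
  which is continuous because the swap is continuous on X+X and S carries the quotient
  topology.\<close>

lemma openin_quotient_topology:
  "openin (quotient_topology T f S) U \<longleftrightarrow> U \<subseteq> S \<and> openin T {x \<in> topspace T. f x \<in> U}"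
  unfolding quotient_topology_def
  by (simp add: topology_inverse'[OF istopology_quotient])

lemma topspace_quotient_topology:
  assumes "f ` topspace T \<subseteq> S"
  shows "topspace (quotient_topology T f S) = S"
proof -
  have "{x \<in> topspace T. f x \<in> S} = topspace T" using assms by auto
  then have "openin (quotient_topology T f S) S" by (simp add: openin_quotient_topology)
  then have "S \<subseteq> topspace (quotient_topology T f S)" by (rule openin_subset)
  moreover have "topspace (quotient_topology T f S) \<subseteq> S"
    unfolding topspace_def by (auto simp: openin_quotient_topology)
  ultimately show ?thesis by blast
qed

lemma quotient_map_quotient_topology:
  "quotient_map T (quotient_topology T f (f ` topspace T)) f"
  unfolding quotient_map_def
  by (simp add: topspace_quotient_topology openin_quotient_topology)

lemma topspace_coprod_top: "topspace (coprod_top X) = UNIV \<times> topspace X"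
  by (auto simp: coprod_top_def)

lemma quotient_map_gcls: "quotient_map (coprod_top X) (corel_top X \<gamma>) (gcls X \<gamma>)"
  unfolding corel_top_def corel_set_def by (rule quotient_map_quotient_topology)

lemma gcls_self:
  assumes "is_metric_on (topspace (coprod_top X)) \<gamma>" "u \<in> topspace (coprod_top X)"
  shows "u \<in> gcls X \<gamma> u"
  using assms by (auto simp: gcls_def is_metric_on_def)

lemma corel_metric_gcls:
  assumes m: "is_metric_on (topspace (coprod_top X)) \<gamma>"
    and u: "u \<in> topspace (coprod_top X)" and v: "v \<in> topspace (coprod_top X)"
  shows "corel_metric \<gamma> (gcls X \<gamma> u) (gcls X \<gamma> v) = \<gamma> u v"
proof -
  define u' where "u' = (SOME w. w \<in> gcls X \<gamma> u)"
  define v' where "v' = (SOME w. w \<in> gcls X \<gamma> v)"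
  have "u' \<in> gcls X \<gamma> u" unfolding u'_def using gcls_self[OF m u] by (rule someI)
  then have u': "u' \<in> topspace (coprod_top X)" "\<gamma> u u' = 0" "\<gamma> u' u = 0"
    by (auto simp: gcls_def)
  have "v' \<in> gcls X \<gamma> v" unfolding v'_def using gcls_self[OF m v] by (rule someI)
  then have v': "v' \<in> topspace (coprod_top X)" "\<gamma> v v' = 0" "\<gamma> v' v = 0"
    by (auto simp: gcls_def)
  have tri: "\<gamma> a c \<le> \<gamma> a b + \<gamma> b c"
    if "a \<in> topspace (coprod_top X)" "b \<in> topspace (coprod_top X)" "c \<in> topspace (coprod_top X)"
    for a b c
    using m that unfolding is_metric_on_def by blast
  have "\<gamma> u' v' \<le> \<gamma> u' u + \<gamma> u v'" using tri u' u v' by blast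
  also have "\<gamma> u v' \<le> \<gamma> u v + \<gamma> v v'" using tri u v v' by blast
  finally have le: "\<gamma> u' v' \<le> \<gamma> u v" using u' v' by simp
  have "\<gamma> u v \<le> \<gamma> u u' + \<gamma> u' v" using tri u' u v by blast
  also have "\<gamma> u' v \<le> \<gamma> u' v' + \<gamma> v' v" using tri u' v v' by blast
  finally have ge: "\<gamma> u v \<le> \<gamma> u' v'" using u' v' by simp
  show ?thesis unfolding corel_metric_def u'_def[symmetric] v'_def[symmetric]
    using le ge by (rule antisym)
qed

lemma corel_q_in_corel_set: "x \<in> topspace X \<Longrightarrow> corel_q X \<gamma> i x \<in> corel_set X \<gamma>"
  by (auto simp: corel_q_def corel_set_def topspace_coprod_top)

lemma corel_metric_corel_q:
  assumes "is_metric_on (topspace (coprod_top X)) \<gamma>" "x \<in> topspace X" "y \<in> topspace X"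
  shows "corel_metric \<gamma> (corel_q X \<gamma> i x) (corel_q X \<gamma> j y) = \<gamma> (i, x) (j, y)"
  unfolding corel_q_def using assms by (intro corel_metric_gcls) (auto simp: topspace_coprod_top)

lemma symmetric_submetric_imp_swap_le:
  assumes m: "is_metric_on (topspace (coprod_top X)) \<gamma>" and "symmetric_submetric X \<gamma>"
    and x: "x \<in> topspace X" and y: "y \<in> topspace X"
  shows "\<gamma> (\<not> i, x) (\<not> j, y) \<le> \<gamma> (i, x) (j, y)"
proof -
  obtain s where
    nonexp: "\<forall>A\<in>corel_set X \<gamma>. \<forall>B\<in>corel_set X \<gamma>. corel_metric \<gamma> (s A) (s B) \<le> corel_metric \<gamma> A B"
    and swap: "\<forall>x\<in>topspace X. s (corel_q X \<gamma> False x) = corel_q X \<gamma> True x \<and>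
                               s (corel_q X \<gamma> True x) = corel_q X \<gamma> False x"
    using assms(2) unfolding symmetric_submetric_def by blast
  have s_q: "s (corel_q X \<gamma> k z) = corel_q X \<gamma> (\<not> k) z" if "z \<in> topspace X" for k z
    using swap that by (cases k) auto
  show ?thesis
    using nonexp[rule_format, OF corel_q_in_corel_set[OF x] corel_q_in_corel_set[OF y], of i j]
    by (simp add: s_q x y corel_metric_corel_q[OF m])
qed

lemma symmetric_submetric_imp_swap_eq:
  assumes "is_metric_on (topspace (coprod_top X)) \<gamma>" "symmetric_submetric X \<gamma>"
    and "x \<in> topspace X" "y \<in> topspace X"
  shows "\<gamma> (i, x) (j, y) = \<gamma> (\<not> i, x) (\<not> j, y)"
proof (rule antisym)
  show "\<gamma> (i, x) (j, y) \<le> \<gamma> (\<not> i, x) (\<not> j, y)"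
    using symmetric_submetric_imp_swap_le[OF assms, of "\<not> i" "\<not> j"] by simp
  show "\<gamma> (\<not> i, x) (\<not> j, y) \<le> \<gamma> (i, x) (j, y)"
    using symmetric_submetric_imp_swap_le[OF assms] .
qed

definition coprod_swap :: "bool \<times> 'a \<Rightarrow> bool \<times> 'a" where
  "coprod_swap u = (\<not> fst u, snd u)"

lemma coprod_swap_swap [simp]: "coprod_swap (coprod_swap u) = u"
  by (simp add: coprod_swap_def)

lemma coprod_swap_in_topspace [simp]:
  "coprod_swap u \<in> topspace (coprod_top X) \<longleftrightarrow> u \<in> topspace (coprod_top X)"
  by (cases u) (simp add: coprod_swap_def topspace_coprod_top)

lemma continuous_map_coprod_swap: "continuous_map (coprod_top X) (coprod_top X) coprod_swap"
  unfolding continuous_map_def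
proof (intro conjI allI impI)
  show "coprod_swap \<in> topspace (coprod_top X) \<rightarrow> topspace (coprod_top X)"
    by simp
  fix U assume "openin (coprod_top X) U"
  moreover have "{x. (i, x) \<in> {u \<in> topspace (coprod_top X). coprod_swap u \<in> U}}
                 = {x. (\<not> i, x) \<in> U}" if "U \<subseteq> topspace (coprod_top X)" for i
    using that by (auto simp: coprod_swap_def topspace_coprod_top)
  ultimately show "openin (coprod_top X) {u \<in> topspace (coprod_top X). coprod_swap u \<in> U}"
    unfolding coprod_top_def openin_sum_topology by (auto simp: coprod_top_def)
qed

lemma mem_image_coprod_swap: "w \<in> coprod_swap ` A \<longleftrightarrow> coprod_swap w \<in> A"
  by (metis coprod_swap_swap image_eqI imageE)

lemma gcls_coprod_swap:
  assumes inv: "\<And>u v. u \<in> topspace (coprod_top X) \<Longrightarrow> v \<in> topspace (coprod_top X) \<Longrightarrow>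
                  \<gamma> (coprod_swap u) (coprod_swap v) = \<gamma> u v"
    and u: "u \<in> topspace (coprod_top X)"
  shows "coprod_swap ` gcls X \<gamma> u = gcls X \<gamma> (coprod_swap u)"
proof (rule set_eqI)
  fix w
  have "w \<in> coprod_swap ` gcls X \<gamma> u \<longleftrightarrow>
      coprod_swap w \<in> topspace (coprod_top X) \<and>
      \<gamma> u (coprod_swap w) = 0 \<and> \<gamma> (coprod_swap w) u = 0"
    by (simp add: mem_image_coprod_swap gcls_def)
  also have "\<dots> \<longleftrightarrow>
      w \<in> topspace (coprod_top X) \<and> \<gamma> (coprod_swap u) w = 0 \<and> \<gamma> w (coprod_swap u) = 0"
    using inv[OF u, of "coprod_swap w"] inv[OF _ u, of "coprod_swap w"] by auto
  also have "\<dots> \<longleftrightarrow> w \<in> gcls X \<gamma> (coprod_swap u)"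
    by (simp add: gcls_def)
  finally show "w \<in> coprod_swap ` gcls X \<gamma> u \<longleftrightarrow> w \<in> gcls X \<gamma> (coprod_swap u)" .
qed

lemma swap_invariant_imp_symmetric_submetric:
  assumes m: "is_metric_on (topspace (coprod_top X)) \<gamma>"
    and inv: "\<And>u v. u \<in> topspace (coprod_top X) \<Longrightarrow> v \<in> topspace (coprod_top X) \<Longrightarrow>
                  \<gamma> (coprod_swap u) (coprod_swap v) = \<gamma> u v"
  shows "symmetric_submetric X \<gamma>"
proof -
  define s where "s = (\<lambda>A :: (bool \<times> 'a) set. coprod_swap ` A)"
  have s_gcls: "s (gcls X \<gamma> u) = gcls X \<gamma> (coprod_swap u)" if "u \<in> topspace (coprod_top X)" for u
    unfolding s_def using inv that by (rule gcls_coprod_swap)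
  have "continuous_map (coprod_top X) (corel_top X \<gamma>) (gcls X \<gamma> \<circ> coprod_swap)"
    using continuous_map_coprod_swap quotient_imp_continuous_map[OF quotient_map_gcls]
    by (rule continuous_map_compose)
  then have "continuous_map (coprod_top X) (corel_top X \<gamma>) (s \<circ> gcls X \<gamma>)"
    by (rule continuous_map_eq) (simp add: s_gcls)
  then have "continuous_map (corel_top X \<gamma>) (corel_top X \<gamma>) s"
    using continuous_compose_quotient_map_eq[OF quotient_map_gcls] by blast
  moreover have "corel_metric \<gamma> (s A) (s B) \<le> corel_metric \<gamma> A B"
    if AB: "A \<in> corel_set X \<gamma>" "B \<in> corel_set X \<gamma>" for A B
  proof -
    obtain u v where "u \<in> topspace (coprod_top X)" "v \<in> topspace (coprod_top X)"
      and "A = gcls X \<gamma> u" "B = gcls X \<gamma> v"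
      using AB unfolding corel_set_def by blast
    then show ?thesis by (simp add: s_gcls corel_metric_gcls[OF m] inv)
  qed
  moreover have "s (corel_q X \<gamma> i x) = corel_q X \<gamma> (\<not> i) x" if "x \<in> topspace X" for i x
    using that by (simp add: corel_q_def s_gcls topspace_coprod_top coprod_swap_def)
  ultimately show ?thesis
    unfolding symmetric_submetric_def by (intro exI[of _ s]) simp
qed

theorem lemma5p6:
  fixes X :: "'a topology" and d :: "'a \<Rightarrow> 'a \<Rightarrow> ennreal"
    and \<gamma> :: "(bool \<times> 'a) \<Rightarrow> (bool \<times> 'a) \<Rightarrow> ennreal"
  assumes "sep_metric_CH X d"
    and "binary_cont_submetric X d \<gamma>"
  shows "symmetric_submetric X \<gamma> \<longleftrightarrow>
    (\<forall>x\<in>topspace X. \<forall>y\<in>topspace X. \<forall>i j. \<gamma> (i, x) (j, y) = \<gamma> (\<not> i, x) (\<not> j, y))"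
proof -
  have m: "is_metric_on (topspace (coprod_top X)) \<gamma>"
    using assms(2) by (simp add: binary_cont_submetric_def)
  show ?thesis
  proof
    assume "symmetric_submetric X \<gamma>"
    then show "\<forall>x\<in>topspace X. \<forall>y\<in>topspace X. \<forall>i j. \<gamma> (i, x) (j, y) = \<gamma> (\<not> i, x) (\<not> j, y)"
      using symmetric_submetric_imp_swap_eq[OF m] by blast
  next
    assume inv: "\<forall>x\<in>topspace X. \<forall>y\<in>topspace X. \<forall>i j. \<gamma> (i, x) (j, y) = \<gamma> (\<not> i, x) (\<not> j, y)"
    have "\<gamma> (coprod_swap u) (coprod_swap v) = \<gamma> u v"
      if "u \<in> topspace (coprod_top X)" "v \<in> topspace (coprod_top X)" for u v
      using inv[rule_format, of "snd u" "snd v" "fst u" "fst v"] that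
      by (simp add: coprod_swap_def topspace_coprod_top mem_Times_iff)
    then show "symmetric_submetric X \<gamma>"
      by (rule swap_invariant_imp_symmetric_submetric[OF m])
  qed
qed

end
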